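(* Let $\|\cdot\|^*$ be an algebra norm on $\mathbb{R}^n$, let $J:\mathbb{R}\to\mathbb{R}$ be continuous, and let $C,\delta>0$. Then there exists a real polynomial $P$ such that, for every $\phi\in\mathbb{R}^n$ with $\|\phi\|^*\le C$, we have $\|P\circ\phi-J\circ\phi\|_\infty\le\delta$ and $\|P\circ\phi\|^*\le\rho(C,\delta,J)$.
   Context: An algebra norm is a norm $N$ on $\mathbb{R}^n$ (functions on $\{1,\dots,n\}$) with $N(fg)\le N(f)N(g)$ (pointwise product) and $N(\mathbf 1)=1$. $\|f\|_\infty=\max_x|f(x)|$; $P\circ\phi$, $J\circ\phi$ are pointwise compositions. For a real polynomial $P(x)=\sum_ka_kx^k$, $R_P(x)=\sum_k|a_k|x^k$. For continuous $J$ and $C,\delta>0$, $\rho(C,\delta,J)$ is twice the infimum of $R_P(C)$ over all real polynomials $P$ with $|P(x)-J(x)|\le\delta$ for all $x\in[-C,C]$. *)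

theory Defs
  imports Complex_Main "HOL-Computational_Algebra.Polynomial"
begin

text \<open>Functions on a finite index type 'n (playing the role of {1..n}) with pointwise
  operations.\<close>

definition algebra_norm :: "(('n::finite \<Rightarrow> real) \<Rightarrow> real) \<Rightarrow> bool" where
  "algebra_norm N \<longleftrightarrow>
     (\<forall>f. 0 \<le> N f) \<and>
     (\<forall>f. N f = 0 \<longleftrightarrow> f = (\<lambda>x. 0)) \<and>
     (\<forall>c f. N (\<lambda>x. c * f x) = \<bar>c\<bar> * N f) \<and>
     (\<forall>f g. N (\<lambda>x. f x + g x) \<le> N f + N g) \<and>
     (\<forall>f g. N (\<lambda>x. f x * g x) \<le> N f * N g) \<and>
     N (\<lambda>x. 1) = 1"

definition sup_norm :: "('n::finite \<Rightarrow> real) \<Rightarrow> real" where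
  "sup_norm f = Max (range (\<lambda>x. \<bar>f x\<bar>))"

definition R_poly :: "real poly \<Rightarrow> real \<Rightarrow> real" where
  "R_poly P x = (\<Sum>k\<le>degree P. \<bar>coeff P k\<bar> * x ^ k)"

definition rho :: "real \<Rightarrow> real \<Rightarrow> (real \<Rightarrow> real) \<Rightarrow> real" where
  "rho C \<delta> J = 2 * Inf {R_poly P C | P. \<forall>x\<in>{-C..C}. \<bar>poly P x - J x\<bar> \<le> \<delta>}"

end

theory Submission
  imports Defs "HOL-Analysis.Weierstrass_Theorems"
begin

text \<open>Since \<open>N\<close> dominates every coordinate, \<open>N \<phi> \<le> C\<close> puts all values of \<open>\<phi>\<close> in \<open>[-C, C]\<close>,
  where a polynomial \<open>\<delta>\<close>-approximation of \<open>J\<close> controls the sup-norm error. Subadditivity,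
  homogeneity and submultiplicativity give \<open>N (P \<circ> \<phi>) \<le> R_P (N \<phi>) \<le> R_P C\<close>. It remains to
  choose among the \<open>\<delta>\<close>-approximations (which exist by Weierstrass) one with \<open>R_P C\<close> at most twice
  the infimum; if that infimum is \<open>0\<close>, then \<open>|J| \<le> \<delta>\<close> on \<open>[-C, C]\<close> and \<open>P = 0\<close> will do.\<close>

lemma algebra_norm_nonneg: "algebra_norm N \<Longrightarrow> 0 \<le> N f"
  unfolding algebra_norm_def by blast

lemma algebra_norm_pos: "algebra_norm N \<Longrightarrow> f \<noteq> (\<lambda>x. 0) \<Longrightarrow> 0 < N f"
  unfolding algebra_norm_def by (metis order_le_less)

lemma algebra_norm_zero: "algebra_norm N \<Longrightarrow> N (\<lambda>x. 0) = 0"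
  unfolding algebra_norm_def by blast

lemma algebra_norm_one: "algebra_norm N \<Longrightarrow> N (\<lambda>x. 1) = 1"
  unfolding algebra_norm_def by blast

lemma algebra_norm_scale: "algebra_norm N \<Longrightarrow> N (\<lambda>x. c * f x) = \<bar>c\<bar> * N f"
  unfolding algebra_norm_def by blast

lemma algebra_norm_add: "algebra_norm N \<Longrightarrow> N (\<lambda>x. f x + g x) \<le> N f + N g"
  unfolding algebra_norm_def by blast

lemma algebra_norm_mult: "algebra_norm N \<Longrightarrow> N (\<lambda>x. f x * g x) \<le> N f * N g"
  unfolding algebra_norm_def by blast

lemma algebra_norm_power:
  assumes "algebra_norm N"
  shows "N (\<lambda>x. \<phi> x ^ k) \<le> N \<phi> ^ k"
proof (induction k)
  case 0
  show ?case using algebra_norm_one[OF assms] by simp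
next
  case (Suc k)
  have "N (\<lambda>x. \<phi> x ^ Suc k) = N (\<lambda>x. \<phi> x * \<phi> x ^ k)" by simp
  also have "\<dots> \<le> N \<phi> * N (\<lambda>x. \<phi> x ^ k)" by (rule algebra_norm_mult[OF assms])
  also have "\<dots> \<le> N \<phi> * N \<phi> ^ k"
    using Suc algebra_norm_nonneg[OF assms] by (intro mult_left_mono) auto
  finally show ?case by simp
qed

lemma algebra_norm_sum_monomials:
  assumes "algebra_norm N" "finite A"
  shows "N (\<lambda>x. \<Sum>k\<in>A. c k * \<phi> x ^ k) \<le> (\<Sum>k\<in>A. \<bar>c k\<bar> * N \<phi> ^ k)"
  using assms(2)
proof (induction A rule: finite_induct)
  case empty
  show ?case using algebra_norm_zero[OF assms(1)] by simp
next
  case (insert a A)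
  have "N (\<lambda>x. \<Sum>k\<in>insert a A. c k * \<phi> x ^ k)
      = N (\<lambda>x. c a * \<phi> x ^ a + (\<Sum>k\<in>A. c k * \<phi> x ^ k))"
    using insert by simp
  also have "\<dots> \<le> N (\<lambda>x. c a * \<phi> x ^ a) + N (\<lambda>x. \<Sum>k\<in>A. c k * \<phi> x ^ k)"
    by (rule algebra_norm_add[OF assms(1)])
  also have "N (\<lambda>x. c a * \<phi> x ^ a) = \<bar>c a\<bar> * N (\<lambda>x. \<phi> x ^ a)"
    by (rule algebra_norm_scale[OF assms(1)])
  also have "\<dots> \<le> \<bar>c a\<bar> * N \<phi> ^ a"
    using algebra_norm_power[OF assms(1)] by (intro mult_left_mono) auto
  finally show ?case using insert by simp
qed

lemma algebra_norm_poly_le_R_poly: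
  assumes "algebra_norm N"
  shows "N (\<lambda>x. poly P (\<phi> x)) \<le> R_poly P (N \<phi>)"
  using algebra_norm_sum_monomials[OF assms finite_atMost, where c = "coeff P" and \<phi> = \<phi>]
  by (simp add: poly_altdef R_poly_def)

text \<open>Test submultiplicativity against the indicator \<open>e\<close> of \<open>x\<close>: \<open>e \<phi> = \<phi> x e\<close>.\<close>

lemma abs_le_algebra_norm:
  assumes "algebra_norm N"
  shows "\<bar>\<phi> x\<bar> \<le> N \<phi>"
proof -
  define e where "e = (\<lambda>y. if y = x then (1::real) else 0)"
  have "e \<noteq> (\<lambda>y. 0)" by (metis e_def zero_neq_one)
  then have e_pos: "0 < N e" by (rule algebra_norm_pos[OF assms])
  have "\<bar>\<phi> x\<bar> * N e = N (\<lambda>y. \<phi> x * e y)" by (rule algebra_norm_scale[OF assms, symmetric])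
  also have "(\<lambda>y. \<phi> x * e y) = (\<lambda>y. e y * \<phi> y)" by (auto simp: e_def)
  also have "N \<dots> \<le> N e * N \<phi>" by (rule algebra_norm_mult[OF assms])
  finally show ?thesis using e_pos by (simp add: mult.commute)
qed

lemma R_poly_nonneg: "0 \<le> C \<Longrightarrow> 0 \<le> R_poly P C"
  unfolding R_poly_def by (intro sum_nonneg) auto

lemma R_poly_mono: "0 \<le> x \<Longrightarrow> x \<le> y \<Longrightarrow> R_poly P x \<le> R_poly P y"
  unfolding R_poly_def by (intro sum_mono mult_left_mono power_mono) auto

lemma abs_poly_le_R_poly:
  assumes "\<bar>x\<bar> \<le> C"
  shows "\<bar>poly P x\<bar> \<le> R_poly P C"
proof -
  have "\<bar>poly P x\<bar> = \<bar>\<Sum>i\<le>degree P. coeff P i * x ^ i\<bar>" by (simp add: poly_altdef)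
  also have "\<dots> \<le> (\<Sum>i\<le>degree P. \<bar>coeff P i\<bar> * \<bar>x\<bar> ^ i)"
    using sum_abs[of "\<lambda>i. coeff P i * x ^ i"] by (simp add: abs_mult power_abs)
  also have "\<dots> \<le> R_poly P C" using R_poly_mono[OF abs_ge_zero assms] by (simp add: R_poly_def)
  finally show ?thesis .
qed

lemma exists_poly_uniform_approx:
  fixes J :: "real \<Rightarrow> real"
  assumes "continuous_on {a..b} J" "0 < \<delta>"
  obtains P :: "real poly" where "\<forall>x\<in>{a..b}. \<bar>poly P x - J x\<bar> \<le> \<delta>"
proof -
  obtain g where g: "real_polynomial_function g" "\<And>x. x \<in> {a..b} \<Longrightarrow> \<bar>J x - g x\<bar> < \<delta>"
    using Stone_Weierstrass_real_polynomial_function[OF compact_Icc assms] by blast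
  obtain c n where g_eq: "g = (\<lambda>x. \<Sum>i\<le>n. c i * x ^ i)"
    using g(1) real_polynomial_function_iff_sum by blast
  have "poly (\<Sum>i\<le>n. monom (c i) i) x = g x" for x by (simp add: g_eq poly_sum poly_monom)
  with g(2) have "\<forall>x\<in>{a..b}. \<bar>poly (\<Sum>i\<le>n. monom (c i) i) x - J x\<bar> \<le> \<delta>"
    by (simp add: abs_minus_commute less_imp_le)
  then show ?thesis by (rule that)
qed

text \<open>If the infimum defining \<open>rho\<close> is \<open>0\<close> it need not be attained, but then \<open>P = 0\<close> still
  approximates \<open>J\<close>, since \<open>|J x| \<le> \<delta> + |poly Q x| \<le> \<delta> + R_poly Q C\<close> for every admissible \<open>Q\<close>.\<close>

lemma exists_poly_approx_R_poly_le_rho: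
  fixes J :: "real \<Rightarrow> real"
  assumes "continuous_on {-C..C} J" "0 \<le> C" "0 < \<delta>"
  obtains P :: "real poly"
  where "\<forall>x\<in>{-C..C}. \<bar>poly P x - J x\<bar> \<le> \<delta>" "R_poly P C \<le> rho C \<delta> J"
proof -
  define S where "S = {R_poly P C | P. \<forall>x\<in>{-C..C}. \<bar>poly P x - J x\<bar> \<le> \<delta>}"
  have rho_eq: "rho C \<delta> J = 2 * Inf S" unfolding rho_def S_def ..
  obtain P0 where "\<forall>x\<in>{-C..C}. \<bar>poly P0 x - J x\<bar> \<le> \<delta>"
    using exists_poly_uniform_approx[OF assms(1,3)] .
  then have S_ne: "S \<noteq> {}" unfolding S_def by blast
  have S_nonneg: "\<And>s. s \<in> S \<Longrightarrow> 0 \<le> s" unfolding S_def using R_poly_nonneg[OF assms(2)] by blast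
  have "0 \<le> Inf S" using S_ne S_nonneg by (intro cInf_greatest) auto
  then consider "0 < Inf S" | "Inf S = 0" by linarith
  then show ?thesis
  proof cases
    case 1
    then obtain s where "s \<in> S" "s < 2 * Inf S" using cInf_lessD[OF S_ne, of "2 * Inf S"] by auto
    then show ?thesis using that unfolding rho_eq S_def by force
  next
    case 2
    have "\<bar>J x\<bar> \<le> \<delta>" if x: "x \<in> {-C..C}" for x
    proof (rule ccontr)
      assume "\<not> \<bar>J x\<bar> \<le> \<delta>"
      then have "Inf S < \<bar>J x\<bar> - \<delta>" using 2 by linarith
      then obtain s where "s \<in> S" "s < \<bar>J x\<bar> - \<delta>" using cInf_lessD[OF S_ne] by blast
      then obtain Q where Q: "\<forall>x\<in>{-C..C}. \<bar>poly Q x - J x\<bar> \<le> \<delta>" "R_poly Q C < \<bar>J x\<bar> - \<delta>"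
        unfolding S_def by blast
      have "\<bar>poly Q x\<bar> \<le> R_poly Q C" using x by (intro abs_poly_le_R_poly) auto
      moreover have "\<bar>poly Q x - J x\<bar> \<le> \<delta>" using Q(1) x by blast
      ultimately show False using Q(2) by linarith
    qed
    moreover have "R_poly 0 C \<le> rho C \<delta> J" by (simp add: R_poly_def rho_eq 2)
    ultimately show ?thesis using that[of 0] by simp
  qed
qed

theorem lemma4p3:
  fixes N :: "('n::finite \<Rightarrow> real) \<Rightarrow> real"
    and J :: "real \<Rightarrow> real"
    and C \<delta> :: real
  assumes "algebra_norm N"
    and "continuous_on UNIV J"
    and "C > 0" and "\<delta> > 0"
  shows "\<exists>P :: real poly. \<forall>\<phi> :: 'n \<Rightarrow> real. N \<phi> \<le> C \<longrightarrow>
           sup_norm (\<lambda>x. poly P (\<phi> x) - J (\<phi> x)) \<le> \<delta> \<and>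
           N (\<lambda>x. poly P (\<phi> x)) \<le> rho C \<delta> J"
proof -
  have "continuous_on {-C..C} J" using assms(2) continuous_on_subset by blast
  then obtain P where approx: "\<forall>x\<in>{-C..C}. \<bar>poly P x - J x\<bar> \<le> \<delta>"
    and R_le: "R_poly P C \<le> rho C \<delta> J"
    using exists_poly_approx_R_poly_le_rho less_imp_le[OF assms(3)] assms(4) by metis
  show ?thesis
  proof (intro exI allI impI conjI)
    fix \<phi> :: "'n \<Rightarrow> real"
    assume N_le: "N \<phi> \<le> C"
    have "\<phi> x \<in> {-C..C}" for x using abs_le_algebra_norm[OF assms(1), of \<phi> x] N_le by auto
    then show "sup_norm (\<lambda>x. poly P (\<phi> x) - J (\<phi> x)) \<le> \<delta>"
      unfolding sup_norm_def using approx by (subst Max_le_iff) auto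
    have "N (\<lambda>x. poly P (\<phi> x)) \<le> R_poly P (N \<phi>)" by (rule algebra_norm_poly_le_R_poly[OF assms(1)])
    also have "\<dots> \<le> R_poly P C" by (rule R_poly_mono[OF algebra_norm_nonneg[OF assms(1)] N_le])
    finally show "N (\<lambda>x. poly P (\<phi> x)) \<le> rho C \<delta> J" using R_le by linarith
  qed
qed

end
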